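(* Let $0<\varepsilon<2/9$ and let $\mathbf{U}$ be the $7\times 7$ matrix $$\mathbf{U}=\begin{pmatrix} 0 & -1 & \varepsilon & -10 & -\tfrac13+\varepsilon & -\tfrac13+\varepsilon & -\tfrac13+\varepsilon\\ \varepsilon & 0 & -1 & -10 & -\tfrac13+\varepsilon & -\tfrac13+\varepsilon & -\tfrac13+\varepsilon\\ -1 & \varepsilon & 0 & -10 & -\tfrac13+\varepsilon & -\tfrac13+\varepsilon & -\tfrac13+\varepsilon\\ -2 & -2 & 2 & 0 & -\tfrac13 & -\tfrac13 & -\tfrac13\\ -\tfrac13 & -\tfrac13 & -\tfrac13 & 10 & 0 & -1 & \varepsilon\\ -\tfrac13 & -\tfrac13 & -\tfrac13 & 10 & \varepsilon & 0 & -1\\ -\tfrac13 & -\tfrac13 & -\tfrac13 & 10 & -1 & \varepsilon & 0 \end{pmatrix},\qquad \mathbf{R}=\begin{pmatrix} 0 & -1 & \varepsilon\\ \varepsilon & 0 & -1\\ -1 & \varepsilon & 0\end{pmatrix}.$$ Let $\mathbf{x}(\cdot)$ be a solution of the best-reply dynamics in the game with payoff matrix $\mathbf{U}$ such that neither $x_1(0)=x_2(0)=x_3(0)$ nor $x_5(0)=x_6(0)=x_7(0)$. Set $\lambda=x_1+x_2+x_3$, $\mu=x_5+x_6+x_7$ (these are positive for all $t\ge0$), $\bar{\mathbf{x}}=(x_1,x_2,x_3)/\lambda$ and $\hat{\mathbf{x}}=(x_5,x_6,x_7)/\mu$. Then for almost every $t\ge 0$, $$\dot{\bar{\mathbf{x}}}\in\Big(1+\frac{\dot\lambda}{\lambda}\Big)\big(BR_{\mathbf{R}}(\bar{\mathbf{x}})-\bar{\mathbf{x}}\big)\quad\text{and}\quad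 \dot{\hat{\mathbf{x}}}\in\Big(1+\frac{\dot\mu}{\mu}\Big)\big(BR_{\mathbf{R}}(\hat{\mathbf{x}})-\hat{\mathbf{x}}\big).$$
   Context: $S_n=\{\mathbf{x}\in\mathbb{R}_+^n:\sum_i x_i=1\}$. For a square matrix $\mathbf{A}$ of size $n$, $BR_{\mathbf{A}}(\mathbf{x})=\{\mathbf{y}\in S_n:\mathbf{y}\cdot\mathbf{A}\mathbf{x}=\max_{\mathbf{z}\in S_n}\mathbf{z}\cdot\mathbf{A}\mathbf{x}\}$. The best-reply dynamics in the game with payoff matrix $\mathbf{U}$ is the differential inclusion $\dot{\mathbf{x}}\in BR_{\mathbf{U}}(\mathbf{x})-\mathbf{x}$; a solution is an absolutely continuous $\mathbf{x}:\mathbb{R}_+\to S_7$ satisfying it for almost every $t$. *)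

theory Defs
  imports "HOL-Analysis.Analysis"
begin

(* Vectors of R^n are represented as functions nat => real, indices 0..n-1
   (paper index k corresponds to index k-1 here); entries outside are 0. *)
definition std_simplex :: "nat \<Rightarrow> (nat \<Rightarrow> real) set" where
  "std_simplex n = {x. (\<forall>i<n. 0 \<le> x i) \<and> (\<Sum>i<n. x i) = 1 \<and> (\<forall>i\<ge>n. x i = 0)}"

definition bil :: "nat \<Rightarrow> (nat \<Rightarrow> nat \<Rightarrow> real) \<Rightarrow> (nat \<Rightarrow> real) \<Rightarrow> (nat \<Rightarrow> real) \<Rightarrow> real" where
  "bil n A y x = (\<Sum>i<n. y i * (\<Sum>j<n. A i j * x j))"

definition BR :: "nat \<Rightarrow> (nat \<Rightarrow> nat \<Rightarrow> real) \<Rightarrow> (nat \<Rightarrow> real) \<Rightarrow> (nat \<Rightarrow> real) set" where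
  "BR n A x = {y \<in> std_simplex n. \<forall>z\<in>std_simplex n. bil n A z x \<le> bil n A y x}"

definition abs_cont_on :: "real \<Rightarrow> real \<Rightarrow> (real \<Rightarrow> real) \<Rightarrow> bool" where
  "abs_cont_on a b f \<longleftrightarrow>
     (\<forall>e>0. \<exists>d>0. \<forall>(m::nat) (u::nat\<Rightarrow>real) v.
        (\<forall>k<m. a \<le> u k \<and> u k \<le> v k \<and> v k \<le> b) \<and>
        (\<forall>k<m. \<forall>l<m. k \<noteq> l \<longrightarrow> v k \<le> u l \<or> v l \<le> u k) \<and>
        (\<Sum>k<m. v k - u k) < d
        \<longrightarrow> (\<Sum>k<m. \<bar>f (v k) - f (u k)\<bar>) < e)"

definition BR_solution :: "nat \<Rightarrow> (nat \<Rightarrow> nat \<Rightarrow> real) \<Rightarrow> (real \<Rightarrow> nat \<Rightarrow> real) \<Rightarrow> bool" where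
  "BR_solution n U x \<longleftrightarrow>
     (\<forall>t\<ge>0. x t \<in> std_simplex n) \<and>
     (\<forall>i<n. \<forall>T\<ge>0. abs_cont_on 0 T (\<lambda>t. x t i)) \<and>
     (AE t in lborel. 0 \<le> t \<longrightarrow>
        (\<exists>d. (\<forall>i<n. ((\<lambda>s. x s i) has_real_derivative d i) (at t)) \<and>
             (\<exists>y\<in>BR n U (x t). \<forall>i<n. d i = y i - x t i)))"

definition matU :: "real \<Rightarrow> nat \<Rightarrow> nat \<Rightarrow> real" where
  "matU e i j = (if i < 7 \<and> j < 7 then
     [[0, -1, e, -10, -1/3+e, -1/3+e, -1/3+e],
      [e, 0, -1, -10, -1/3+e, -1/3+e, -1/3+e],
      [-1, e, 0, -10, -1/3+e, -1/3+e, -1/3+e],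
      [-2, -2, 2, 0, -1/3, -1/3, -1/3],
      [-1/3, -1/3, -1/3, 10, 0, -1, e],
      [-1/3, -1/3, -1/3, 10, e, 0, -1],
      [-1/3, -1/3, -1/3, 10, -1, e, 0]] ! i ! j else 0)"

definition matR :: "real \<Rightarrow> nat \<Rightarrow> nat \<Rightarrow> real" where
  "matR e i j = (if i < 3 \<and> j < 3 then
     [[0, -1, e], [e, 0, -1], [-1, e, 0]] ! i ! j else 0)"

end

theory Submission
  imports Defs
begin

text \<open>Where the dynamics holds, \<open>x\<^sub>i' = y\<^sub>i - x\<^sub>i \<ge> -x\<^sub>i\<close>, so \<open>t \<mapsto> e\<^sup>t x\<^sub>i(t)\<close> is nondecreasing:
  coordinates positive at time 0 stay positive, whence \<open>\<lambda>, \<mu> > 0\<close>.  Monotonicity follows from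
  absolute continuity by a Cousin-lemma argument: on a fine tagged division, tags outside the
  exceptional null set see a nonnegative derivative, and intervals tagged in it fit into an open
  set of small measure.  Within each block of three strategies the payoffs of \<open>U\<close> differ from
  those of \<open>R\<close> by a row-independent constant, so the block part of a best reply, renormalised,
  is a best reply to \<open>x\<^sub>i / \<lambda>\<close> under \<open>R\<close>; the quotient rule with \<open>\<lambda>' = Y - \<lambda>\<close>, where \<open>Y\<close>
  is the block weight of the best reply, gives the factor \<open>1 + \<lambda>'/\<lambda> = Y/\<lambda>\<close>.\<close>

section \<open>Monotonicity from a nonnegative derivative almost everywhere\<close>

lemma nonneg_derivative_straddle:
  fixes f :: "real \<Rightarrow> real"
  assumes "(f has_real_derivative D) (at t)" "0 \<le> D" "0 < \<epsilon>"
  obtains r where "0 < r"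
    "\<And>u v. u \<le> t \<Longrightarrow> t \<le> v \<Longrightarrow> {u..v} \<subseteq> ball t r \<Longrightarrow> -\<epsilon> * (v - u) \<le> f v - f u"
proof -
  have "((\<lambda>s. (f s - f t) / (s - t)) \<longlongrightarrow> D) (at t)"
    using assms(1) by (simp add: has_field_derivative_iff)
  then have "\<forall>\<^sub>F s in at t. dist ((f s - f t) / (s - t)) D < \<epsilon>"
    using assms(3) by (rule tendstoD)
  then obtain r where "0 < r" and r: "\<And>s. s \<noteq> t \<Longrightarrow> dist s t < r \<Longrightarrow> -\<epsilon> < (f s - f t) / (s - t)"
    unfolding eventually_at using assms(2) by (force simp: dist_real_def)
  have right: "-\<epsilon> * (v - t) \<le> f v - f t" if "t \<le> v" "dist v t < r" for v
  proof (cases "v = t")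
    case False
    with that have "0 < v - t" by simp
    with r[OF False that(2)] show ?thesis by (simp add: field_simps)
  qed simp
  have left: "-\<epsilon> * (t - u) \<le> f t - f u" if "u \<le> t" "dist u t < r" for u
  proof (cases "u = t")
    case False
    with that have "u - t < 0" by simp
    with r[OF False that(2)] show ?thesis by (simp add: field_simps)
  qed simp
  show thesis
  proof (rule that[OF \<open>0 < r\<close>])
    fix u v assume uv: "u \<le> t" "t \<le> v" "{u..v} \<subseteq> ball t r"
    then have "u \<in> {u..v}" "v \<in> {u..v}" by auto
    with uv(3) have "u \<in> ball t r" "v \<in> ball t r" by blast+
    then have "dist u t < r" "dist v t < r" by (auto simp: dist_commute)
    then show "-\<epsilon> * (v - u) \<le> f v - f u"
      using left[OF uv(1)] right[OF uv(2)] by (simp add: algebra_simps)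
  qed
qed

lemma null_set_small_open_superset:
  assumes "N \<in> null_sets lborel" "0 < \<delta>"
  obtains T where "open T" "N \<subseteq> T" "T \<in> lmeasurable" "measure lebesgue T < \<delta>"
proof -
  have N: "N \<in> null_sets lebesgue"
    using assms(1) by (rule null_sets_completionI)
  then obtain T where T: "open T" "N \<subseteq> T" "T - N \<in> lmeasurable" "emeasure lebesgue (T - N) < \<delta>"
    using sets_lebesgue_outer_open assms(2) by blast
  have "N \<in> lmeasurable" "measure lebesgue N = 0"
    using N by (auto simp: fmeasurable_def null_sets_def measure_eq_0_null_sets)
  moreover have "T = (T - N) \<union> N"
    using T(2) by blast
  moreover have "measure lebesgue (T - N) < \<delta>"
    using T(3,4) assms(2) by (simp add: emeasure_eq_measure2 ennreal_less_iff)
  ultimately have "T \<in> lmeasurable" "measure lebesgue T < \<delta>"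
    using T(3) measure_Un_le[of "T - N" lebesgue N] by (metis fmeasurable.Un, auto)
  with T(1,2) show thesis by (rule that)
qed

lemma sum_nonoverlapping_intervals_le_measure:
  fixes u v :: "nat \<Rightarrow> real"
  assumes "\<forall>k<m. u k \<le> v k \<and> {u k..v k} \<subseteq> T"
    and "\<forall>k<m. \<forall>l<m. k \<noteq> l \<longrightarrow> v k \<le> u l \<or> v l \<le> u k"
    and "T \<in> lmeasurable"
  shows "(\<Sum>k<m. v k - u k) \<le> measure lebesgue T"
proof -
  have "(\<Sum>k<m. v k - u k) = (\<Sum>k<m. measure lebesgue {u k..v k})"
    using assms(1) by simp
  also have "\<dots> = measure lebesgue (\<Union>k<m. {u k..v k})"
  proof (rule measure_negligible_finite_Union_image[symmetric])
    show "pairwise (\<lambda>k l. negligible ({u k..v k} \<inter> {u l..v l})) {..<m}"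
    proof (unfold pairwise_def, intro ballI impI)
      fix k l assume "k \<in> {..<m}" "l \<in> {..<m}" "k \<noteq> l"
      with assms(2) have "{u k..v k} \<inter> {u l..v l} \<subseteq> {v k} \<or> {u k..v k} \<inter> {u l..v l} \<subseteq> {v l}"
        by fastforce
      then show "negligible ({u k..v k} \<inter> {u l..v l})"
        using negligible_subset negligible_sing by metis
    qed
  qed auto
  also have "\<dots> \<le> measure lebesgue T"
    using assms(1,3) by (intro measure_mono_fmeasurable) auto
  finally show ?thesis .
qed

lemma tagged_division_of_real_interval:
  fixes a b x :: real
  assumes "p tagged_division_of {a..b}" "(x, K) \<in> p"
  obtains u v where "K = {u..v}" "a \<le> u" "u \<le> x" "x \<le> v" "v \<le> b"
proof -
  obtain u v where K: "K = cbox u v"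
    using assms by (meson tagged_division_ofD(4))
  moreover have "x \<in> K" "K \<subseteq> {a..b}"
    using assms by (meson tagged_division_ofD(2,3))+
  ultimately show thesis
    by (intro that[of u v]) (auto simp: box_real(2))
qed

lemma tagged_division_enumerate_nontrivial:
  fixes a b :: real and g :: "real set \<Rightarrow> real"
  assumes p: "p tagged_division_of {a..b}" and "q \<subseteq> p" and nontrivial: "\<forall>(x, K)\<in>q. Inf K < Sup K"
  obtains u v where "(\<Sum>(x, K)\<in>q. g K) = (\<Sum>k<card q. g {u k..v k})"
    "\<forall>k<card q. a \<le> u k \<and> u k < v k \<and> v k \<le> b \<and> (\<exists>x. (x, {u k..v k}) \<in> q)"
    "\<forall>k<card q. \<forall>l<card q. k \<noteq> l \<longrightarrow> v k \<le> u l \<or> v l \<le> u k"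
proof -
  have "finite q"
    using p \<open>q \<subseteq> p\<close> finite_subset by blast
  then obtain h where h: "bij_betw h {..<card q} q"
    using bij_betw_from_nat_into_finite lessThan_atLeast0 ex_bij_betw_nat_finite by metis
  define u where "u k = Inf (snd (h k))" for k
  define v where "v k = Sup (snd (h k))" for k
  have hq: "h k \<in> q" if "k < card q" for k
    using h that by (auto simp: bij_betw_def)
  have uv: "snd (h k) = {u k..v k} \<and> a \<le> u k \<and> u k < v k \<and> v k \<le> b" if "k < card q" for k
  proof -
    obtain x K where xK: "h k = (x, K)" by fastforce
    with hq[OF that] \<open>q \<subseteq> p\<close> have "(x, K) \<in> p" by auto
    then obtain c d where "K = {c..d}" "a \<le> c" "c \<le> x" "x \<le> d" "d \<le> b"
      by (rule tagged_division_of_real_interval[OF p])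
    moreover have "Inf K < Sup K"
      using nontrivial hq[OF that] xK by auto
    ultimately show ?thesis
      using xK by (simp add: u_def v_def)
  qed
  have "\<forall>k<card q. a \<le> u k \<and> u k < v k \<and> v k \<le> b \<and> (\<exists>x. (x, {u k..v k}) \<in> q)"
  proof (intro allI impI)
    fix k assume k: "k < card q"
    have "(fst (h k), snd (h k)) \<in> q" using hq[OF k] by simp
    then show "a \<le> u k \<and> u k < v k \<and> v k \<le> b \<and> (\<exists>x. (x, {u k..v k}) \<in> q)"
      using uv[OF k] by auto
  qed
  moreover have "\<forall>k<card q. \<forall>l<card q. k \<noteq> l \<longrightarrow> v k \<le> u l \<or> v l \<le> u k"
  proof (intro allI impI, rule ccontr)
    fix k l assume kl: "k < card q" "l < card q" "k \<noteq> l" and overlap: "\<not> (v k \<le> u l \<or> v l \<le> u k)"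
    have "h k \<noteq> h l"
      using h kl by (auto simp: bij_betw_def inj_on_def)
    moreover have "(fst (h k), snd (h k)) \<in> p" "(fst (h l), snd (h l)) \<in> p"
      using hq kl \<open>q \<subseteq> p\<close> by auto
    ultimately have "interior (snd (h k)) \<inter> interior (snd (h l)) = {}"
      using tagged_division_ofD(5)[OF p] by (metis prod.collapse)
    moreover have "(max (u k) (u l) + min (v k) (v l)) / 2 \<in> interior (snd (h k)) \<inter> interior (snd (h l))"
      using uv[OF kl(1)] uv[OF kl(2)] overlap by auto
    ultimately show False by blast
  qed
  moreover have "(\<Sum>(x, K)\<in>q. g K) = (\<Sum>k<card q. g {u k..v k})"
  proof -
    have "(\<Sum>(x, K)\<in>q. g K) = (\<Sum>k<card q. g (snd (h k)))"
      using sum.reindex_bij_betw[OF h, of "\<lambda>(x, K). g K"] by (simp add: case_prod_unfold)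
    also have "\<dots> = (\<Sum>k<card q. g {u k..v k})"
      using uv by simp
    finally show ?thesis .
  qed
  ultimately show thesis
    using that by blast
qed

text \<open>One-sided absolute continuity: enough for monotonicity, and inherited by \<open>\<lambda>t. exp t * g t\<close>
  from a nonnegative absolutely continuous \<open>g\<close>.\<close>

definition lower_abs_cont_on :: "real \<Rightarrow> real \<Rightarrow> (real \<Rightarrow> real) \<Rightarrow> bool" where
  "lower_abs_cont_on a b f \<longleftrightarrow>
     (\<forall>\<epsilon>>0. \<exists>\<delta>>0. \<forall>(m::nat) (u::nat\<Rightarrow>real) v.
        (\<forall>k<m. a \<le> u k \<and> u k \<le> v k \<and> v k \<le> b) \<and>
        (\<forall>k<m. \<forall>l<m. k \<noteq> l \<longrightarrow> v k \<le> u l \<or> v l \<le> u k) \<and>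
        (\<Sum>k<m. v k - u k) < \<delta>
        \<longrightarrow> -\<epsilon> < (\<Sum>k<m. f (v k) - f (u k)))"

lemma tagged_division_sum_increments_ge:
  fixes f :: "real \<Rightarrow> real"
  assumes p: "p tagged_division_of {a..b}" and "a \<le> b" "q \<subseteq> p" "0 \<le> c"
    and increment: "\<And>x K. (x, K) \<in> q \<Longrightarrow> -c * (Sup K - Inf K) \<le> f (Sup K) - f (Inf K)"
  shows "-c * (b - a) \<le> (\<Sum>(x, K)\<in>q. f (Sup K) - f (Inf K))"
proof -
  have "(\<Sum>(x, K)\<in>q. Sup K - Inf K) \<le> (\<Sum>(x, K)\<in>p. Sup K - Inf K)"
  proof (rule sum_mono2)
    show "finite p" using p by blast
    show "0 \<le> (case z of (x, K) \<Rightarrow> Sup K - Inf K)" if z: "z \<in> p - q" for z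
    proof -
      obtain x K where xK: "z = (x, K)" "(x, K) \<in> p"
        using z by (metis DiffD1 surj_pair)
      then obtain u v where "K = {u..v}" "u \<le> x" "x \<le> v"
        using tagged_division_of_real_interval[OF p] by metis
      with xK(1) show ?thesis by simp
    qed
  qed (rule \<open>q \<subseteq> p\<close>)
  also have "\<dots> = b - a"
    using additive_tagged_division_1[OF \<open>a \<le> b\<close> p, of id] by simp
  finally have "-c * (b - a) \<le> -c * (\<Sum>(x, K)\<in>q. Sup K - Inf K)"
    using \<open>0 \<le> c\<close> by (simp add: mult_left_mono)
  also have "\<dots> = (\<Sum>(x, K)\<in>q. -c * (Sup K - Inf K))"
    by (simp add: sum_distrib_left case_prod_unfold)
  also have "\<dots> \<le> (\<Sum>(x, K)\<in>q. f (Sup K) - f (Inf K))"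
    using increment by (intro sum_mono) auto
  finally show ?thesis .
qed

lemma lower_abs_cont_on_small_tagged_sum:
  assumes "lower_abs_cont_on a b f" "0 < \<epsilon>"
  obtains \<delta> where "0 < \<delta>"
    "\<And>p q T. p tagged_division_of {a..b} \<Longrightarrow> q \<subseteq> p \<Longrightarrow> (\<And>x K. (x, K) \<in> q \<Longrightarrow> Inf K < Sup K \<and> K \<subseteq> T)
      \<Longrightarrow> T \<in> lmeasurable \<Longrightarrow> measure lebesgue T < \<delta> \<Longrightarrow> -\<epsilon> < (\<Sum>(x, K)\<in>q. f (Sup K) - f (Inf K))"
proof -
  obtain \<delta> where "0 < \<delta>" and \<delta>: "\<forall>(m::nat) u v. (\<forall>k<m. a \<le> u k \<and> u k \<le> v k \<and> v k \<le> b) \<and>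
      (\<forall>k<m. \<forall>l<m. k \<noteq> l \<longrightarrow> v k \<le> u l \<or> v l \<le> u k) \<and> (\<Sum>k<m. v k - u k) < \<delta>
      \<longrightarrow> -\<epsilon> < (\<Sum>k<m. f (v k) - f (u k))"
    using assms unfolding lower_abs_cont_on_def by blast
  have "-\<epsilon> < (\<Sum>(x, K)\<in>q. f (Sup K) - f (Inf K))"
    if p: "p tagged_division_of {a..b}" and "q \<subseteq> p" and q: "\<And>x K. (x, K) \<in> q \<Longrightarrow> Inf K < Sup K \<and> K \<subseteq> T"
      and T: "T \<in> lmeasurable" "measure lebesgue T < \<delta>" for p q T
  proof -
    have "\<forall>(x, K)\<in>q. Inf K < Sup K"
      using q by auto
    then obtain u v where sum_eq: "(\<Sum>(x, K)\<in>q. f (Sup K) - f (Inf K)) = (\<Sum>k<card q. f (Sup {u k..v k}) - f (Inf {u k..v k}))"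
      and uv: "\<forall>k<card q. a \<le> u k \<and> u k < v k \<and> v k \<le> b \<and> (\<exists>x. (x, {u k..v k}) \<in> q)"
      and disjoint: "\<forall>k<card q. \<forall>l<card q. k \<noteq> l \<longrightarrow> v k \<le> u l \<or> v l \<le> u k"
      using tagged_division_enumerate_nontrivial[OF p \<open>q \<subseteq> p\<close>] by blast
    have "\<forall>k<card q. u k \<le> v k \<and> {u k..v k} \<subseteq> T"
      using uv q by (meson less_imp_le)
    then have "(\<Sum>k<card q. v k - u k) < \<delta>"
      using sum_nonoverlapping_intervals_le_measure[OF _ disjoint T(1)] T(2) by fastforce
    then have "-\<epsilon> < (\<Sum>k<card q. f (v k) - f (u k))"
      using \<delta> uv disjoint by (meson less_imp_le)
    also have "\<dots> = (\<Sum>(x, K)\<in>q. f (Sup K) - f (Inf K))"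
      unfolding sum_eq using uv by (intro sum.cong) (auto simp: less_imp_le)
    finally show ?thesis .
  qed
  with \<open>0 < \<delta>\<close> show thesis
    by (rule that)
qed

lemma lower_abs_cont_on_decrease_le:
  assumes ac: "lower_abs_cont_on a b f" and "a \<le> b" and N: "N \<in> null_sets lborel"
    and der: "\<And>t. t \<in> {a..b} - N \<Longrightarrow> \<exists>D\<ge>0. (f has_real_derivative D) (at t)"
    and "0 < \<epsilon>"
  shows "f a - f b \<le> \<epsilon> * (b - a) + \<epsilon>"
proof -
  obtain \<delta> where "0 < \<delta>" and small_sum: "\<And>p q T. p tagged_division_of {a..b} \<Longrightarrow> q \<subseteq> p
      \<Longrightarrow> (\<And>x K. (x, K) \<in> q \<Longrightarrow> Inf K < Sup K \<and> K \<subseteq> T) \<Longrightarrow> T \<in> lmeasurable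
      \<Longrightarrow> measure lebesgue T < \<delta> \<Longrightarrow> -\<epsilon> < (\<Sum>(x, K)\<in>q. f (Sup K) - f (Inf K))"
    using lower_abs_cont_on_small_tagged_sum[OF ac \<open>0 < \<epsilon>\<close>] by blast
  obtain T where T: "open T" "N \<subseteq> T" "T \<in> lmeasurable" "measure lebesgue T < \<delta>"
    using null_set_small_open_superset[OF N \<open>0 < \<delta>\<close>] by blast
  \<comment> \<open>A gauge that is small inside \<open>T\<close> at points of \<open>N\<close> and a straddle gauge elsewhere.\<close>
  have "\<exists>r>0. (t \<in> N \<longrightarrow> ball t r \<subseteq> T) \<and> (t \<in> {a..b} - N \<longrightarrow>
      (\<forall>u v. u \<le> t \<longrightarrow> t \<le> v \<longrightarrow> {u..v} \<subseteq> ball t r \<longrightarrow> -\<epsilon> * (v - u) \<le> f v - f u))" for t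
  proof (cases "t \<in> {a..b} - N")
    case True
    then obtain D where "0 \<le> D" "(f has_real_derivative D) (at t)"
      using der by blast
    then show ?thesis
      using True nonneg_derivative_straddle \<open>0 < \<epsilon>\<close> by (metis DiffD2)
  next
    case outside: False
    show ?thesis
    proof (cases "t \<in> N")
      case True
      with T(1,2) obtain r where "0 < r" "ball t r \<subseteq> T"
        by (meson openE subsetD)
      with outside show ?thesis by blast
    next
      case False
      with outside show ?thesis by (intro exI[of _ 1]) auto
    qed
  qed
  then obtain r where r: "\<And>t. 0 < r t" "\<And>t. t \<in> N \<Longrightarrow> ball t (r t) \<subseteq> T"
    "\<And>t u v. t \<in> {a..b} - N \<Longrightarrow> u \<le> t \<Longrightarrow> t \<le> v \<Longrightarrow> {u..v} \<subseteq> ball t (r t) \<Longrightarrow> -\<epsilon> * (v - u) \<le> f v - f u"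
    by metis
  obtain p where p: "p tagged_division_of {a..b}" and fine: "(\<lambda>t. ball t (r t)) fine p"
    using fine_division_exists_real gauge_ball_dependent r(1) by metis
  define q where "q = {(x, K) \<in> p. x \<in> N \<and> Inf K < Sup K}"
  have "finite p" "q \<subseteq> p" "p - q \<subseteq> p"
    using p by (auto simp: q_def)
  have "-\<epsilon> * (Sup K - Inf K) \<le> f (Sup K) - f (Inf K)" if xK: "(x, K) \<in> p - q" for x K
  proof -
    obtain u v where uv: "K = {u..v}" "a \<le> u" "u \<le> x" "x \<le> v" "v \<le> b"
      using xK tagged_division_of_real_interval[OF p] by blast
    moreover have "K \<subseteq> ball x (r x)"
      using fine xK by (auto dest: fineD)
    moreover have "u = v" if "x \<in> N"
      using xK that uv by (auto simp: q_def)
    ultimately show ?thesis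
      using r(3)[of x u v] by (cases "x \<in> N") simp_all
  qed
  then have "-\<epsilon> * (b - a) \<le> (\<Sum>(x, K)\<in>p - q. f (Sup K) - f (Inf K))"
    using \<open>0 < \<epsilon>\<close> tagged_division_sum_increments_ge[OF p \<open>a \<le> b\<close> \<open>p - q \<subseteq> p\<close>, of \<epsilon> f] by simp
  moreover have "-\<epsilon> < (\<Sum>(x, K)\<in>q. f (Sup K) - f (Inf K))"
  proof (rule small_sum[OF p \<open>q \<subseteq> p\<close> _ T(3,4)])
    fix x K assume "(x, K) \<in> q"
    then have "x \<in> N" "Inf K < Sup K" "(x, K) \<in> p"
      by (auto simp: q_def)
    moreover have "K \<subseteq> ball x (r x)"
      using fine \<open>(x, K) \<in> p\<close> by (auto dest: fineD)
    ultimately show "Inf K < Sup K \<and> K \<subseteq> T"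
      using r(2) by blast
  qed
  moreover have "f b - f a = (\<Sum>(x, K)\<in>p - q. f (Sup K) - f (Inf K)) + (\<Sum>(x, K)\<in>q. f (Sup K) - f (Inf K))"
    using additive_tagged_division_1[OF \<open>a \<le> b\<close> p, of f] sum.subset_diff[OF \<open>q \<subseteq> p\<close> \<open>finite p\<close>] by metis
  ultimately show ?thesis
    by (simp add: algebra_simps)
qed

lemma lower_abs_cont_on_mono:
  assumes ac: "lower_abs_cont_on a b f" and "a \<le> b" and N: "N \<in> null_sets lborel"
    and der: "\<And>t. t \<in> {a..b} - N \<Longrightarrow> \<exists>D\<ge>0. (f has_real_derivative D) (at t)"
  shows "f a \<le> f b"
proof (rule field_le_epsilon)
  fix e :: real assume "0 < e"
  with \<open>a \<le> b\<close> have "0 < e / (b - a + 1)" by simp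
  from lower_abs_cont_on_decrease_le[OF ac \<open>a \<le> b\<close> N der this]
  have "f a - f b \<le> e / (b - a + 1) * (b - a + 1)"
    by (simp add: distrib_left)
  with \<open>a \<le> b\<close> show "f a \<le> f b + e" by simp
qed

lemma exp_mult_increment_ge:
  fixes u v b x y :: real
  assumes "u \<le> v" "v \<le> b" "0 \<le> x"
  shows "-exp b * \<bar>y - x\<bar> \<le> exp v * y - exp u * x"
proof -
  have "exp u \<le> exp v" "exp v \<le> exp b" using assms by auto
  then have "0 \<le> x * (exp v - exp u)" "-exp b * \<bar>y - x\<bar> \<le> -exp v * \<bar>y - x\<bar>"
    using assms(3) by (simp_all add: mult_right_mono)
  moreover have "-exp v * \<bar>y - x\<bar> \<le> exp v * (y - x)"
    by (cases "x \<le> y") (auto simp: algebra_simps)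
  moreover have "exp v * y - exp u * x = exp v * (y - x) + x * (exp v - exp u)"
    by (simp add: algebra_simps)
  ultimately show ?thesis by linarith
qed

lemma lower_abs_cont_on_exp_mult:
  assumes ac: "abs_cont_on a b g" and nonneg: "\<And>t. t \<in> {a..b} \<Longrightarrow> 0 \<le> g t"
  shows "lower_abs_cont_on a b (\<lambda>t. exp t * g t)"
  unfolding lower_abs_cont_on_def
proof (intro allI impI)
  fix \<epsilon> :: real assume "0 < \<epsilon>"
  then have "0 < \<epsilon> / exp b" by simp
  then obtain \<delta> where "0 < \<delta>" and \<delta>: "\<forall>(m::nat) u v. (\<forall>k<m. a \<le> u k \<and> u k \<le> v k \<and> v k \<le> b) \<and>
      (\<forall>k<m. \<forall>l<m. k \<noteq> l \<longrightarrow> v k \<le> u l \<or> v l \<le> u k) \<and> (\<Sum>k<m. v k - u k) < \<delta>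
      \<longrightarrow> (\<Sum>k<m. \<bar>g (v k) - g (u k)\<bar>) < \<epsilon> / exp b"
    using ac[unfolded abs_cont_on_def, rule_format] by blast
  show "\<exists>\<delta>>0. \<forall>(m::nat) u v. (\<forall>k<m. a \<le> u k \<and> u k \<le> v k \<and> v k \<le> b) \<and>
      (\<forall>k<m. \<forall>l<m. k \<noteq> l \<longrightarrow> v k \<le> u l \<or> v l \<le> u k) \<and> (\<Sum>k<m. v k - u k) < \<delta>
      \<longrightarrow> -\<epsilon> < (\<Sum>k<m. exp (v k) * g (v k) - exp (u k) * g (u k))"
  proof (intro exI[of _ \<delta>] conjI allI impI)
    fix m :: nat and u v :: "nat \<Rightarrow> real"
    assume intervals: "(\<forall>k<m. a \<le> u k \<and> u k \<le> v k \<and> v k \<le> b) \<and>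
      (\<forall>k<m. \<forall>l<m. k \<noteq> l \<longrightarrow> v k \<le> u l \<or> v l \<le> u k) \<and> (\<Sum>k<m. v k - u k) < \<delta>"
    then have "(\<Sum>k<m. \<bar>g (v k) - g (u k)\<bar>) < \<epsilon> / exp b"
      using \<delta> by blast
    then have "exp b * (\<Sum>k<m. \<bar>g (v k) - g (u k)\<bar>) < \<epsilon>"
      by (simp add: field_simps)
    then have "-\<epsilon> < (\<Sum>k<m. -exp b * \<bar>g (v k) - g (u k)\<bar>)"
      by (simp add: sum_negf sum_distrib_left)
    also have "\<dots> \<le> (\<Sum>k<m. exp (v k) * g (v k) - exp (u k) * g (u k))"
      using intervals nonneg by (intro sum_mono exp_mult_increment_ge) auto
    finally show "-\<epsilon> < (\<Sum>k<m. exp (v k) * g (v k) - exp (u k) * g (u k))" .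
  qed (rule \<open>0 < \<delta>\<close>)
qed

section \<open>Best replies\<close>

definition payoff :: "nat \<Rightarrow> (nat \<Rightarrow> nat \<Rightarrow> real) \<Rightarrow> (nat \<Rightarrow> real) \<Rightarrow> nat \<Rightarrow> real" where
  "payoff n A x i = (\<Sum>j<n. A i j * x j)"

lemma bil_eq_sum_payoff: "bil n A y x = (\<Sum>i<n. y i * payoff n A x i)"
  by (simp add: bil_def payoff_def)

lemma std_simplex_sum_mult: "y \<in> std_simplex n \<Longrightarrow> (\<Sum>i<n. y i * c) = c"
  by (simp add: std_simplex_def flip: sum_distrib_right)

lemma BR_imp_support_optimal:
  assumes y: "y \<in> BR n A x" and "j < n" "k < n" "0 < y j"
  shows "payoff n A x k \<le> payoff n A x j"
proof (rule ccontr)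
  assume worse: "\<not> ?thesis"
  \<comment> \<open>Shifting the weight of \<open>j\<close> onto the strictly better \<open>k\<close> would increase the payoff.\<close>
  define z where "z i = y i + (if i = k then y j else 0) - (if i = j then y j else 0)" for i
  have ys: "y \<in> std_simplex n" and ymax: "\<And>z. z \<in> std_simplex n \<Longrightarrow> bil n A z x \<le> bil n A y x"
    using y unfolding BR_def by auto
  have "j \<noteq> k" using worse by auto
  have "z \<in> std_simplex n"
    using ys assms(2-4) \<open>j \<noteq> k\<close> unfolding std_simplex_def z_def by (auto simp: sum.distrib sum_subtractf)
  moreover have "bil n A z x = bil n A y x + y j * (payoff n A x k - payoff n A x j)"
  proof -
    have "bil n A z x = (\<Sum>i<n. y i * payoff n A x i + (if i = k then y j * payoff n A x i else 0)
        - (if i = j then y j * payoff n A x i else 0))"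
      unfolding bil_eq_sum_payoff z_def by (intro sum.cong) (auto simp: ring_distribs)
    also have "\<dots> = bil n A y x + y j * (payoff n A x k - payoff n A x j)"
      using assms(2,3) by (simp add: bil_eq_sum_payoff sum.distrib sum_subtractf right_diff_distrib)
    finally show ?thesis .
  qed
  moreover have "0 < y j * (payoff n A x k - payoff n A x j)"
    using worse \<open>0 < y j\<close> by simp
  ultimately show False
    using ymax by fastforce
qed

lemma support_optimal_imp_BR:
  assumes ys: "y \<in> std_simplex n"
    and support: "\<forall>i<n. 0 < y i \<longrightarrow> (\<forall>k<n. payoff n A x k \<le> payoff n A x i)"
  shows "y \<in> BR n A x"
proof -
  have y: "\<forall>i<n. 0 \<le> y i" "(\<Sum>i<n. y i) = 1"
    using ys unfolding std_simplex_def by auto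
  have "\<not> (\<forall>i<n. y i \<le> 0)"
    using y(2) sum_nonpos[of "{..<n}" y] by auto
  then obtain j where j: "j < n" "0 < y j"
    by (auto simp: not_le)
  have best: "\<forall>k<n. payoff n A x k \<le> payoff n A x j"
    using support j by blast
  have "bil n A y x = (\<Sum>i<n. y i * payoff n A x j)"
    unfolding bil_eq_sum_payoff
  proof (rule sum.cong)
    fix i assume "i \<in> {..<n}"
    then have "i < n" by simp
    show "y i * payoff n A x i = y i * payoff n A x j"
    proof (cases "0 < y i")
      case True
      with support best \<open>i < n\<close> j(1) have "payoff n A x i = payoff n A x j"
        by (meson order.antisym)
      then show ?thesis by simp
    next
      case False
      with y(1) \<open>i < n\<close> have "y i = 0" by force
      then show ?thesis by simp
    qed
  qed simp
  also have "\<dots> = payoff n A x j"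
    using std_simplex_sum_mult[OF ys] .
  finally have bil_y: "bil n A y x = payoff n A x j" .
  have "bil n A z x \<le> bil n A y x" if zs: "z \<in> std_simplex n" for z
  proof -
    have "bil n A z x \<le> (\<Sum>i<n. z i * payoff n A x j)"
      unfolding bil_eq_sum_payoff using zs best
      by (intro sum_mono mult_left_mono) (auto simp: std_simplex_def)
    then show ?thesis
      using bil_y std_simplex_sum_mult[OF zs] by simp
  qed
  with ys show ?thesis
    unfolding BR_def by auto
qed

lemma BR_nonempty:
  assumes "0 < n"
  obtains y where "y \<in> BR n A x"
proof -
  have "Max (payoff n A x ` {..<n}) \<in> payoff n A x ` {..<n}"
    using assms by (intro Max_in) auto
  then obtain j where "j < n" "payoff n A x j = Max (payoff n A x ` {..<n})"
    by auto
  then have j: "j < n" "\<forall>k<n. payoff n A x k \<le> payoff n A x j"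
    by simp_all
  define y where "y i = (if i = j then 1 else 0 :: real)" for i
  have "y \<in> std_simplex n"
    using j unfolding std_simplex_def y_def by auto
  with j have "y \<in> BR n A x"
    by (intro support_optimal_imp_BR) (auto simp: y_def)
  then show thesis by (rule that)
qed

lemma payoff_normalized:
  "payoff n A (\<lambda>i. if i < n then x i / c else 0) k = payoff n A x k / c"
  by (simp add: payoff_def sum_divide_distrib)

lemma normalized_best_reply_dynamics:
  fixes n :: nat and a :: "real \<Rightarrow> nat \<Rightarrow> real" and y :: "nat \<Rightarrow> real"
  defines "L \<equiv> \<lambda>s. \<Sum>i<n. a s i"
  assumes "0 < L t"
    and der: "\<forall>i<n. ((\<lambda>s. a s i) has_real_derivative y i - a t i) (at t)"
    and nonneg: "\<forall>i<n. 0 \<le> y i"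
    and support: "\<forall>i<n. 0 < y i \<longrightarrow> (\<forall>k<n. payoff n A (a t) k \<le> payoff n A (a t) i)"
  shows "\<exists>dL db. (L has_real_derivative dL) (at t) \<and>
    (\<forall>i<n. ((\<lambda>s. a s i / L s) has_real_derivative db i) (at t)) \<and>
    (\<exists>z\<in>BR n A (\<lambda>i. if i < n then a t i / L t else 0).
       \<forall>i<n. db i = (1 + dL / L t) * (z i - a t i / L t))"
proof -
  define Y where "Y = (\<Sum>i<n. y i)"
  define dL where "dL = Y - L t"
  define db where "db i = ((y i - a t i) * L t - a t i * dL) / (L t * L t)" for i
  have "dL = (\<Sum>i<n. y i - a t i)"
    by (simp add: dL_def Y_def L_def sum_subtractf)
  then have dL: "(L has_real_derivative dL) (at t)"
    unfolding L_def using der by (auto intro!: DERIV_sum)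
  have db: "((\<lambda>s. a s i / L s) has_real_derivative db i) (at t)" if "i < n" for i
    unfolding db_def using der that dL \<open>0 < L t\<close> by (intro DERIV_divide) auto
  have "\<exists>z\<in>BR n A (\<lambda>i. if i < n then a t i / L t else 0). \<forall>i<n. db i = (1 + dL / L t) * (z i - a t i / L t)"
  proof (cases "Y = 0")
    case True
    \<comment> \<open>No weight flows into the block: it decays uniformly, and any best reply will do.\<close>
    then have "\<forall>i<n. y i = 0"
      using nonneg sum_nonneg_eq_0_iff[of "{..<n}" y] unfolding Y_def by simp
    moreover have "0 < n"
      using \<open>0 < L t\<close> unfolding L_def by (metis lessThan_0 sum.empty not_gr0 less_irrefl)
    then obtain z where "z \<in> BR n A (\<lambda>i. if i < n then a t i / L t else 0)"
      by (rule BR_nonempty)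
    ultimately show ?thesis
      using True \<open>0 < L t\<close> by (auto simp: db_def dL_def field_simps)
  next
    case False
    then have "0 < Y"
      using nonneg unfolding Y_def by (metis sum_nonneg lessThan_iff order_le_less)
    define z where "z i = (if i < n then y i / Y else 0)" for i
    have "z \<in> std_simplex n"
      using nonneg \<open>0 < Y\<close> by (auto simp: std_simplex_def z_def Y_def simp flip: sum_divide_distrib)
    moreover have "\<forall>i<n. 0 < z i \<longrightarrow> (\<forall>k<n. payoff n A (a t) k / L t \<le> payoff n A (a t) i / L t)"
      using support \<open>0 < Y\<close> \<open>0 < L t\<close> by (auto simp: z_def zero_less_divide_iff divide_right_mono)
    ultimately have "z \<in> BR n A (\<lambda>i. if i < n then a t i / L t else 0)"
      by (intro support_optimal_imp_BR) (simp_all add: payoff_normalized)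
    moreover have "\<forall>i<n. db i = (1 + dL / L t) * (z i - a t i / L t)"
      using \<open>0 < Y\<close> \<open>0 < L t\<close> by (auto simp: db_def dL_def z_def field_simps)
    ultimately show ?thesis by blast
  qed
  with dL db show ?thesis by blast
qed

section \<open>The best-reply dynamics of \<open>matU\<close>\<close>

lemma BR_solution_nonneg:
  assumes "BR_solution n U x" "0 \<le> t"
  shows "0 \<le> x t i"
  using assms unfolding BR_solution_def std_simplex_def by (cases "i < n") auto

lemma BR_solution_exp_mono:
  assumes sol: "BR_solution n U x" and "i < n" "0 \<le> t"
  shows "x 0 i \<le> exp t * x t i"
proof -
  define P where "P s \<longleftrightarrow> (\<exists>d. (\<forall>i<n. ((\<lambda>s. x s i) has_real_derivative d i) (at s)) \<and>
      (\<exists>y\<in>BR n U (x s). \<forall>i<n. d i = y i - x s i))" for s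
  have "AE s in lborel. 0 \<le> s \<longrightarrow> P s"
    using sol unfolding BR_solution_def P_def by blast
  then obtain N where "{s \<in> space lborel. \<not> (0 \<le> s \<longrightarrow> P s)} \<subseteq> N" "emeasure lborel N = 0" "N \<in> sets lborel"
    by (rule AE_E)
  then have N: "N \<in> null_sets lborel" and dyn: "\<And>s. 0 \<le> s \<Longrightarrow> s \<notin> N \<Longrightarrow> P s"
    by auto
  have "lower_abs_cont_on 0 t (\<lambda>s. exp s * x s i)"
    using sol \<open>i < n\<close> \<open>0 \<le> t\<close> BR_solution_nonneg[OF sol]
    by (intro lower_abs_cont_on_exp_mult) (auto simp: BR_solution_def)
  moreover have "\<exists>D\<ge>0. ((\<lambda>s. exp s * x s i) has_real_derivative D) (at s)" if s: "s \<in> {0..t} - N" for s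
  proof -
    have "P s"
      using dyn s by auto
    then obtain d y where d: "\<forall>i<n. ((\<lambda>s. x s i) has_real_derivative d i) (at s)"
      and "y \<in> BR n U (x s)" "\<forall>i<n. d i = y i - x s i"
      unfolding P_def by blast
    then have "0 \<le> y i" "d i = y i - x s i"
      using \<open>i < n\<close> by (auto simp: BR_def std_simplex_def)
    moreover have "((\<lambda>s. exp s * x s i) has_real_derivative exp s * x s i + exp s * d i) (at s)"
      using d \<open>i < n\<close> by (auto intro!: derivative_eq_intros)
    ultimately show ?thesis
      by (intro exI[of _ "exp s * y i"]) (simp add: right_diff_distrib)
  qed
  ultimately show ?thesis
    using lower_abs_cont_on_mono[OF _ \<open>0 \<le> t\<close> N] by fastforce
qed

lemma BR_solution_pos:
  assumes "BR_solution n U x" "i < n" "0 \<le> t" "0 < x 0 i"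
  shows "0 < x t i"
proof -
  have "0 < exp t * x t i"
    using BR_solution_exp_mono[OF assms(1-3)] assms(4) by linarith
  then show ?thesis
    by (simp add: zero_less_mult_iff)
qed

lemma BR_solution_sum_pos:
  assumes sol: "BR_solution n U x" and "finite I" "I \<subseteq> {..<n}" "\<exists>i\<in>I. 0 < x 0 i" "0 \<le> t"
  shows "0 < (\<Sum>i\<in>I. x t i)"
proof -
  obtain i where "i \<in> I" "0 < x 0 i"
    using assms(4) by blast
  with assms(3,5) have "0 < x t i"
    using BR_solution_pos[OF sol] by blast
  also have "x t i \<le> (\<Sum>i\<in>I. x t i)"
    using \<open>finite I\<close> \<open>i \<in> I\<close> BR_solution_nonneg[OF sol \<open>0 \<le> t\<close>] by (intro member_le_sum) auto
  finally show ?thesis .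
qed

lemma payoff_matU_first_block:
  assumes "k < 3"
  shows "payoff 7 (matU e) z k = payoff 3 (matR e) z k + (-10 * z 3 + (-1/3 + e) * (z 4 + z 5 + z 6))"
proof -
  have "k = 0 \<or> k = 1 \<or> k = 2" using assms by auto
  then show ?thesis
    by (auto simp: payoff_def eval_nat_numeral matU_def matR_def algebra_simps)
qed

lemma payoff_matU_second_block:
  assumes "k < 3"
  shows "payoff 7 (matU e) z (k + 4) = payoff 3 (matR e) (\<lambda>l. z (l + 4)) k + (-1/3 * (z 0 + z 1 + z 2) + 10 * z 3)"
proof -
  have "k = 0 \<or> k = 1 \<or> k = 2" using assms by auto
  then show ?thesis
    by (auto simp: payoff_def eval_nat_numeral matU_def matR_def algebra_simps)
qed

lemma BR_matU_block_support:
  assumes y: "y \<in> BR 7 (matU e) z" and "m \<in> {0, 4}" "i < 3" "0 < y (i + m)" "k < 3"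
  shows "payoff 3 (matR e) (\<lambda>l. z (l + m)) k \<le> payoff 3 (matR e) (\<lambda>l. z (l + m)) i"
  using BR_imp_support_optimal[OF y, of "i + m" "k + m"] assms(2-5)
    payoff_matU_first_block[of i e z] payoff_matU_first_block[of k e z]
    payoff_matU_second_block[of i e z] payoff_matU_second_block[of k e z]
  by auto

lemma BR_matU_normalized_block_dynamics:
  fixes x :: "real \<Rightarrow> nat \<Rightarrow> real" and m :: nat
  assumes L: "L = (\<lambda>s. \<Sum>j<3. x s (j + m))"
    and "m \<in> {0, 4}" and y: "y \<in> BR 7 (matU e) (x t)"
    and der: "\<forall>i<7. ((\<lambda>s. x s i) has_real_derivative y i - x t i) (at t)"
    and "0 < L t"
  shows "\<exists>dL db. (L has_real_derivative dL) (at t) \<and>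
    (\<forall>i<3. ((\<lambda>s. x s (i + m) / L s) has_real_derivative db i) (at t)) \<and>
    (\<exists>z\<in>BR 3 (matR e) (\<lambda>i. if i < 3 then x t (i + m) / L t else 0).
       \<forall>i<3. db i = (1 + dL / L t) * (z i - x t (i + m) / L t))"
  unfolding L
proof (rule normalized_best_reply_dynamics)
  show "0 < (\<Sum>j<3. x t (j + m))"
    using \<open>0 < L t\<close> by (simp add: L)
  show "\<forall>i<3. ((\<lambda>s. x s (i + m)) has_real_derivative y (i + m) - x t (i + m)) (at t)"
    using der \<open>m \<in> {0, 4}\<close> by auto
  show "\<forall>i<3. 0 \<le> y (i + m)"
    using y \<open>m \<in> {0, 4}\<close> by (auto simp: BR_def std_simplex_def)
  show "\<forall>i<3. 0 < y (i + m) \<longrightarrow> (\<forall>k<3. payoff 3 (matR e) (\<lambda>l. x t (l + m)) k \<le> payoff 3 (matR e) (\<lambda>l. x t (l + m)) i)"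
    using BR_matU_block_support[OF y \<open>m \<in> {0, 4}\<close>] by blast
qed

theorem lemma6:
  fixes e :: real and x :: "real \<Rightarrow> nat \<Rightarrow> real"
  assumes "0 < e" and "e < 2/9"
    and "BR_solution 7 (matU e) x"
    and "\<not> (x 0 0 = x 0 1 \<and> x 0 1 = x 0 2)"
    and "\<not> (x 0 4 = x 0 5 \<and> x 0 5 = x 0 6)"
  defines "lam \<equiv> \<lambda>t. x t 0 + x t 1 + x t 2"
    and "mu \<equiv> \<lambda>t. x t 4 + x t 5 + x t 6"
  defines "xbar \<equiv> \<lambda>t i. if i < 3 then x t i / lam t else 0"
    and "xhat \<equiv> \<lambda>t i. if i < 3 then x t (i + 4) / mu t else 0"
  shows "(\<forall>t\<ge>0. 0 < lam t \<and> 0 < mu t) \<and>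
    (AE t in lborel. 0 \<le> t \<longrightarrow>
      (\<exists>dl db. (lam has_real_derivative dl) (at t) \<and>
         (\<forall>i<3. ((\<lambda>s. xbar s i) has_real_derivative db i) (at t)) \<and>
         (\<exists>y\<in>BR 3 (matR e) (xbar t). \<forall>i<3. db i = (1 + dl / lam t) * (y i - xbar t i))) \<and>
      (\<exists>dm dh. (mu has_real_derivative dm) (at t) \<and>
         (\<forall>i<3. ((\<lambda>s. xhat s i) has_real_derivative dh i) (at t)) \<and>
         (\<exists>y\<in>BR 3 (matR e) (xhat t). \<forall>i<3. dh i = (1 + dm / mu t) * (y i - xhat t i))))"
proof -
  note sol = \<open>BR_solution 7 (matU e) x\<close>
  have lam: "lam = (\<lambda>s. \<Sum>j<3. x s (j + 0))" and mu: "mu = (\<lambda>s. \<Sum>j<3. x s (j + 4))"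
    by (simp_all add: lam_def mu_def eval_nat_numeral add.commute add.left_commute)
  have nonneg: "0 \<le> x 0 i" for i
    using BR_solution_nonneg[OF sol] by simp
  have "\<exists>i\<in>{0, 1, 2}. 0 < x 0 i" "\<exists>i\<in>{4, 5, 6}. 0 < x 0 i"
    using assms(4,5) nonneg[of 0] nonneg[of 1] nonneg[of 2] nonneg[of 4] nonneg[of 5] nonneg[of 6]
    by (auto simp: less_le)
  then have pos: "0 < lam t" "0 < mu t" if "0 \<le> t" for t
    using BR_solution_sum_pos[OF sol, of "{0, 1, 2}"] BR_solution_sum_pos[OF sol, of "{4, 5, 6}"] that
    by (simp_all add: lam_def mu_def add.assoc)
  define dynamics where "dynamics t \<longleftrightarrow> (\<exists>d. (\<forall>i<7. ((\<lambda>s. x s i) has_real_derivative d i) (at t)) \<and>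
      (\<exists>y\<in>BR 7 (matU e) (x t). \<forall>i<7. d i = y i - x t i))" for t
  define normalized_dynamics where "normalized_dynamics t \<longleftrightarrow> (\<exists>dl db. (lam has_real_derivative dl) (at t) \<and>
         (\<forall>i<3. ((\<lambda>s. xbar s i) has_real_derivative db i) (at t)) \<and>
         (\<exists>y\<in>BR 3 (matR e) (xbar t). \<forall>i<3. db i = (1 + dl / lam t) * (y i - xbar t i))) \<and>
      (\<exists>dm dh. (mu has_real_derivative dm) (at t) \<and>
         (\<forall>i<3. ((\<lambda>s. xhat s i) has_real_derivative dh i) (at t)) \<and>
         (\<exists>y\<in>BR 3 (matR e) (xhat t). \<forall>i<3. dh i = (1 + dm / mu t) * (y i - xhat t i)))" for t
  have pointwise: "normalized_dynamics t" if "0 \<le> t" "dynamics t" for t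
  proof -
    obtain y where y: "y \<in> BR 7 (matU e) (x t)" "\<forall>i<7. ((\<lambda>s. x s i) has_real_derivative y i - x t i) (at t)"
      using \<open>dynamics t\<close> unfolding dynamics_def by auto
    show ?thesis
      using BR_matU_normalized_block_dynamics[OF lam _ y] BR_matU_normalized_block_dynamics[OF mu _ y]
        pos[OF that(1)] unfolding normalized_dynamics_def xbar_def xhat_def add_0_right by simp
  qed
  have "AE t in lborel. 0 \<le> t \<longrightarrow> dynamics t"
    using sol by (simp add: BR_solution_def dynamics_def)
  then have "AE t in lborel. 0 \<le> t \<longrightarrow> normalized_dynamics t"
    by (rule AE_mp) (simp add: pointwise)
  with pos show ?thesis
    unfolding normalized_dynamics_def by blast
qed

end
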